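(* Let $T$ be a decomposition tree of a distance-hereditary graph $G$, and let $v$ be an internal node of $T$ labeled $\otimes$ with left child $v_l$ and right child $v_r$, such that property (P) holds at $v_l$ and at $v_r$. Then $\hat{min}(v)=\hat{min}(v_l)+\hat{min}(v_r)$.
   Context: All graphs are finite, simple, undirected. For a graph $H$ and $S\subseteq V(H)$, $N_H[S]$ is $S$ together with all vertices adjacent to a vertex of $S$, and $H[S]$ is the induced subgraph. Graphs carry a "twin set": a single-vertex graph on $x$ has twin set $\{x\}$. For vertex-disjoint graphs $G_l,G_r$ with twin sets $TS(G_l),TS(G_r)$: the true twin operation $G_l\otimes G_r$ has vertex set $V(G_l)\cup V(G_r)$, edge set $E(G_l)\cup E(G_r)\cup\{uw: u\in TS(G_l), w\in TS(G_r)\}$ and twin set $TS(G_l)\cup TS(G_r)$; the false twin operation $G_l\odot G_r$ has vertex set $V(G_l)\cup V(G_r)$, edge set $E(G_l)\cup E(G_r)$, twin set $TS(G_l)\cup TS(G_r)$; the attachment operation $G_l\oplus G_r$ has the same vertex and edge sets as $G_l\otimes G_r$ and twin set $TS(G_l)$. A decomposition tree $T$ of $G$ is a rooted binary tree whose leaves are in bijection with $V(G)$, each internal node having a left and a right child and a label in $\{\otimes,\odot,\oplus\}$; for each node $v$ define $\hat G(v)$ and $\hat{TS}(v)$ recursively: for a leaf $x$, the single-vertex graph on $x$ with twin set $\{x\}$; for an internal node $v$ with label $\circ$ and children $v_l,v_r$, $\hat G(v)=\hat G(v_l)\circ\hat G(v_r)$ with the corresponding twin set; one requires $\hat G(\text{root})=G$.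 Then $\hat G(v)$ is the subgraph of $G$ induced by the set $\hat V(v)$ of leaves below $v$. For a node $u$ and $0\le k\le|\hat{TS}(u)|$, call $S\subseteq\hat V(u)$ $k$-feasible if $\hat V(u)\setminus\hat{TS}(u)\subseteq N_{\hat G(u)}[S]$ and there is $X\subseteq S\cap\hat{TS}(u)$ with $|X|=k$ such that $\hat G(u)[S\setminus X]$ has a perfect matching. $\hat\gamma_k(u)$ is the minimum size of a $k$-feasible set. $\hat{min}(u)=\min\{\hat\gamma_k(u):0\le k\le|\hat{TS}(u)|\}$, and $\hat\alpha(u)$, $\hat\beta(u)$ are the smallest and the largest $k$ with $\hat\gamma_k(u)=\hat{min}(u)$. Property (P) holds at $u$ if for every $0\le k\le|\hat{TS}(u)|$: $\hat\gamma_k(u)=\hat{min}(u)+\hat\alpha(u)-k$ when $k\le\hat\alpha(u)$; $\hat\gamma_k(u)=\hat{min}(u)+k-\hat\beta(u)$ when $k\ge\hat\beta(u)$; $\hat\gamma_k(u)=\hat{min}(u)$ when $\hat\alpha(u)<k<\hat\beta(u)$ and $k-\hat\alpha(u)$ is even; and $\hat\gamma_k(u)=\hat{min}(u)+1$ otherwise. *)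

theory Defs
  imports Main "HOL-Library.Extended_Nat"
begin

definition is_graph :: "'a set \<Rightarrow> 'a set set \<Rightarrow> bool" where
  "is_graph V E \<longleftrightarrow> finite V \<and> E \<subseteq> {e. \<exists>x y. e = {x, y} \<and> x \<noteq> y \<and> x \<in> V \<and> y \<in> V}"

definition induced_edges :: "'a set set \<Rightarrow> 'a set \<Rightarrow> 'a set set" where
  "induced_edges E S = {e \<in> E. e \<subseteq> S}"

definition closed_nbhd :: "'a set \<Rightarrow> 'a set set \<Rightarrow> 'a set \<Rightarrow> 'a set" where
  "closed_nbhd V E S = S \<union> {w \<in> V. \<exists>s \<in> S. {s, w} \<in> E}"

definition has_perfect_matching :: "'a set \<Rightarrow> 'a set set \<Rightarrow> bool" where
  "has_perfect_matching W E \<longleftrightarrow>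
     (\<exists>M \<subseteq> induced_edges E W. \<forall>x \<in> W. \<exists>!e. e \<in> M \<and> x \<in> e)"

text \<open>Walks and distances (infinite if no walk exists).\<close>

definition is_walk :: "'a set \<Rightarrow> 'a set set \<Rightarrow> 'a list \<Rightarrow> bool" where
  "is_walk V E p \<longleftrightarrow> p \<noteq> [] \<and> set p \<subseteq> V \<and>
     (\<forall>i. Suc i < length p \<longrightarrow> {p ! i, p ! Suc i} \<in> E)"

definition gdist :: "'a set \<Rightarrow> 'a set set \<Rightarrow> 'a \<Rightarrow> 'a \<Rightarrow> enat" where
  "gdist V E x y = (INF p \<in> {p. is_walk V E p \<and> hd p = x \<and> last p = y}. enat (length p - 1))"

definition connected_graph :: "'a set \<Rightarrow> 'a set set \<Rightarrow> bool" where
  "connected_graph V E \<longleftrightarrow> V \<noteq> {} \<and> (\<forall>x \<in> V. \<forall>y \<in> V. gdist V E x y \<noteq> \<infinity>)"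

definition distance_hereditary :: "'a set \<Rightarrow> 'a set set \<Rightarrow> bool" where
  "distance_hereditary V E \<longleftrightarrow>
     (\<forall>W \<subseteq> V. connected_graph W (induced_edges E W) \<longrightarrow>
        (\<forall>x \<in> W. \<forall>y \<in> W. gdist W (induced_edges E W) x y = gdist V E x y))"

datatype op = TrueTwin | FalseTwin | Attach

datatype 'a dtree = Leaf 'a | Node op "'a dtree" "'a dtree"

fun hV :: "'a dtree \<Rightarrow> 'a set" where
  "hV (Leaf x) = {x}"
| "hV (Node _ l r) = hV l \<union> hV r"

fun hTS :: "'a dtree \<Rightarrow> 'a set" where
  "hTS (Leaf x) = {x}"
| "hTS (Node TrueTwin l r) = hTS l \<union> hTS r"
| "hTS (Node FalseTwin l r) = hTS l \<union> hTS r"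
| "hTS (Node Attach l r) = hTS l"

fun hE :: "'a dtree \<Rightarrow> 'a set set" where
  "hE (Leaf x) = {}"
| "hE (Node TrueTwin l r) = hE l \<union> hE r \<union> {{u, w} | u w. u \<in> hTS l \<and> w \<in> hTS r}"
| "hE (Node FalseTwin l r) = hE l \<union> hE r"
| "hE (Node Attach l r) = hE l \<union> hE r \<union> {{u, w} | u w. u \<in> hTS l \<and> w \<in> hTS r}"

text \<open>Leaves are in bijection with vertices: leaf labels are pairwise distinct.\<close>

fun distinct_leaves :: "'a dtree \<Rightarrow> bool" where
  "distinct_leaves (Leaf x) = True"
| "distinct_leaves (Node _ l r) \<longleftrightarrow> distinct_leaves l \<and> distinct_leaves r \<and> hV l \<inter> hV r = {}"

fun subtrees :: "'a dtree \<Rightarrow> 'a dtree set" where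
  "subtrees (Leaf x) = {Leaf x}"
| "subtrees (Node o' l r) = insert (Node o' l r) (subtrees l \<union> subtrees r)"

definition decomp_tree :: "'a dtree \<Rightarrow> 'a set \<Rightarrow> 'a set set \<Rightarrow> bool" where
  "decomp_tree T V E \<longleftrightarrow> distinct_leaves T \<and> hV T = V \<and> hE T = E"

definition k_feasible :: "'a dtree \<Rightarrow> nat \<Rightarrow> 'a set \<Rightarrow> bool" where
  "k_feasible u k S \<longleftrightarrow> S \<subseteq> hV u \<and>
     hV u - hTS u \<subseteq> closed_nbhd (hV u) (hE u) S \<and>
     (\<exists>X \<subseteq> S \<inter> hTS u. card X = k \<and> has_perfect_matching (S - X) (hE u))"

text \<open>Minimum size of a k-feasible set (\<infinity> if there is none).\<close>

definition hgamma :: "'a dtree \<Rightarrow> nat \<Rightarrow> enat" where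
  "hgamma u k = (INF S \<in> {S. k_feasible u k S}. enat (card S))"

definition hmin :: "'a dtree \<Rightarrow> enat" where
  "hmin u = Min ((hgamma u) ` {0..card (hTS u)})"

definition halpha :: "'a dtree \<Rightarrow> nat" where
  "halpha u = (LEAST k. k \<le> card (hTS u) \<and> hgamma u k = hmin u)"

definition hbeta :: "'a dtree \<Rightarrow> nat" where
  "hbeta u = (GREATEST k. k \<le> card (hTS u) \<and> hgamma u k = hmin u)"

definition prop_P :: "'a dtree \<Rightarrow> bool" where
  "prop_P u \<longleftrightarrow> (\<forall>k \<le> card (hTS u).
     (k \<le> halpha u \<longrightarrow> hgamma u k = hmin u + enat (halpha u - k)) \<and>
     (k \<ge> hbeta u \<longrightarrow> hgamma u k = hmin u + enat (k - hbeta u)) \<and>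
     (halpha u < k \<and> k < hbeta u \<and> even (k - halpha u) \<longrightarrow> hgamma u k = hmin u) \<and>
     (halpha u < k \<and> k < hbeta u \<and> odd (k - halpha u) \<longrightarrow> hgamma u k = hmin u + 1))"

end

theory Submission
  imports Defs
begin

text \<open>
  The feasible sets of a true-twin node are exactly the unions of feasible sets of its two
  children. A union is feasible because all new edges join twin vertices. Conversely, cut a
  feasible set \<open>S\<close> of \<open>v\<close> along the leaves of \<open>v\<^sub>l\<close> and \<open>v\<^sub>r\<close>: a matching edge that crosses the cut
  joins two twin vertices, so each endpoint may be moved into the unmatched set \<open>X\<close> of its
  side; and a non-twin vertex of \<open>v\<^sub>l\<close> has all its neighbours in \<open>v\<^sub>l\<close>, so domination survives.
\<close>

lemma has_perfect_matchingI:
  assumes "M \<subseteq> induced_edges E W" "\<And>x. x \<in> W \<Longrightarrow> \<exists>e \<in> M. x \<in> e"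
    and "\<And>x e e'. \<lbrakk>x \<in> W; e \<in> M; e' \<in> M; x \<in> e; x \<in> e'\<rbrakk> \<Longrightarrow> e = e'"
  shows "has_perfect_matching W E"
  unfolding has_perfect_matching_def
proof (intro exI[of _ M] conjI ballI ex_ex1I)
  show "M \<subseteq> induced_edges E W" by (fact assms(1))
  show "\<exists>e. e \<in> M \<and> x \<in> e" if "x \<in> W" for x
    using assms(2)[OF that] by blast
qed (use assms(3) in blast)

lemma has_perfect_matchingE:
  assumes "has_perfect_matching W E"
  obtains M where "M \<subseteq> induced_edges E W" "\<And>x. x \<in> W \<Longrightarrow> \<exists>e \<in> M. x \<in> e"
    and "\<And>x e e'. \<lbrakk>x \<in> W; e \<in> M; e' \<in> M; x \<in> e; x \<in> e'\<rbrakk> \<Longrightarrow> e = e'"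
proof -
  obtain M where M: "M \<subseteq> induced_edges E W" "\<forall>x \<in> W. \<exists>!e. e \<in> M \<and> x \<in> e"
    using assms unfolding has_perfect_matching_def by (elim exE conjE) simp
  show ?thesis
  proof (rule that[OF M(1)])
    show "\<exists>e \<in> M. x \<in> e" if "x \<in> W" for x
      using M(2) that by (metis ex1_implies_ex)
    show "e = e'" if "x \<in> W" "e \<in> M" "e' \<in> M" "x \<in> e" "x \<in> e'" for x e e'
      using M(2) that by metis
  qed
qed

lemma has_perfect_matching_mono:
  assumes "has_perfect_matching W E" "E \<subseteq> E'"
  shows "has_perfect_matching W E'"
proof -
  obtain M where M: "M \<subseteq> induced_edges E W" "\<And>x. x \<in> W \<Longrightarrow> \<exists>e \<in> M. x \<in> e"
    "\<And>x e e'. \<lbrakk>x \<in> W; e \<in> M; e' \<in> M; x \<in> e; x \<in> e'\<rbrakk> \<Longrightarrow> e = e'"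
    using has_perfect_matchingE[OF assms(1)] by blast
  have "M \<subseteq> induced_edges E' W"
    using M(1) assms(2) unfolding induced_edges_def by auto
  then show ?thesis
    using M(2,3) by (rule has_perfect_matchingI)
qed

lemma has_perfect_matching_Un:
  assumes "has_perfect_matching A E" "has_perfect_matching B E" "A \<inter> B = {}"
  shows "has_perfect_matching (A \<union> B) E"
proof -
  obtain MA where MA: "MA \<subseteq> induced_edges E A" "\<And>x. x \<in> A \<Longrightarrow> \<exists>e \<in> MA. x \<in> e"
    "\<And>x e e'. \<lbrakk>x \<in> A; e \<in> MA; e' \<in> MA; x \<in> e; x \<in> e'\<rbrakk> \<Longrightarrow> e = e'"
    using has_perfect_matchingE[OF assms(1)] by blast
  obtain MB where MB: "MB \<subseteq> induced_edges E B" "\<And>x. x \<in> B \<Longrightarrow> \<exists>e \<in> MB. x \<in> e"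
    "\<And>x e e'. \<lbrakk>x \<in> B; e \<in> MB; e' \<in> MB; x \<in> e; x \<in> e'\<rbrakk> \<Longrightarrow> e = e'"
    using has_perfect_matchingE[OF assms(2)] by blast
  have MA_A: "e \<subseteq> A" if "e \<in> MA" for e
    using that MA(1) unfolding induced_edges_def by auto
  have MB_B: "e \<subseteq> B" if "e \<in> MB" for e
    using that MB(1) unfolding induced_edges_def by auto
  show ?thesis
  proof (rule has_perfect_matchingI[of "MA \<union> MB"])
    show "MA \<union> MB \<subseteq> induced_edges E (A \<union> B)"
      using MA(1) MB(1) unfolding induced_edges_def by auto
    show "\<exists>e \<in> MA \<union> MB. x \<in> e" if "x \<in> A \<union> B" for x
      using that MA(2) MB(2) by blast
    show "e = e'" if "x \<in> A \<union> B" "e \<in> MA \<union> MB" "e' \<in> MA \<union> MB" "x \<in> e" "x \<in> e'"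
      for x e e'
      using that MA(3) MB(3) MA_A MB_B assms(3) by blast
  qed
qed

lemma has_perfect_matching_restrict:
  assumes "has_perfect_matching W E"
  obtains A where "A \<subseteq> W \<inter> U"
    and "\<And>x. x \<in> A \<Longrightarrow> \<exists>e \<in> E. x \<in> e \<and> \<not> e \<subseteq> U"
    and "has_perfect_matching (W \<inter> U - A) {e \<in> E. e \<subseteq> U}"
proof -
  obtain M where M: "M \<subseteq> induced_edges E W" "\<And>x. x \<in> W \<Longrightarrow> \<exists>e \<in> M. x \<in> e"
    "\<And>x e e'. \<lbrakk>x \<in> W; e \<in> M; e' \<in> M; x \<in> e; x \<in> e'\<rbrakk> \<Longrightarrow> e = e'"
    using has_perfect_matchingE[OF assms] by blast
  define A where "A = {x \<in> W \<inter> U. \<exists>e \<in> M. x \<in> e \<and> \<not> e \<subseteq> U}"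
  have "A \<subseteq> W \<inter> U"
    unfolding A_def by blast
  moreover have "\<exists>e \<in> E. x \<in> e \<and> \<not> e \<subseteq> U" if x: "x \<in> A" for x
  proof -
    obtain e where "e \<in> M" "x \<in> e" "\<not> e \<subseteq> U"
      using x unfolding A_def by blast
    moreover from \<open>e \<in> M\<close> have "e \<in> E"
      using M(1) unfolding induced_edges_def by auto
    ultimately show ?thesis by blast
  qed
  moreover have "has_perfect_matching (W \<inter> U - A) {e \<in> E. e \<subseteq> U}"
  proof (rule has_perfect_matchingI[of "{e \<in> M. e \<subseteq> U}"])
    have "x \<notin> A" if "e \<in> M" "e \<subseteq> U" "x \<in> e" for e x
      using that M(3) unfolding A_def by blast
    then show "{e \<in> M. e \<subseteq> U} \<subseteq> induced_edges {e \<in> E. e \<subseteq> U} (W \<inter> U - A)"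
      using M(1) unfolding induced_edges_def by blast
    show "\<exists>e \<in> {e \<in> M. e \<subseteq> U}. x \<in> e" if x: "x \<in> W \<inter> U - A" for x
    proof -
      obtain e where "e \<in> M" "x \<in> e"
        using x M(2) by blast
      moreover have "e \<subseteq> U"
        using x calculation unfolding A_def by blast
      ultimately show ?thesis by blast
    qed
    show "e = e'" if "x \<in> W \<inter> U - A" "e \<in> {e \<in> M. e \<subseteq> U}" "e' \<in> {e \<in> M. e \<subseteq> U}"
      "x \<in> e" "x \<in> e'" for x e e'
      using that M(3) by blast
  qed
  ultimately show ?thesis
    by (rule that)
qed

lemma finite_hV: "finite (hV u)"
  by (induction u) auto

lemma hTS_subset_hV: "hTS u \<subseteq> hV u"
proof (induction u)
  case (Node o' l r)
  then show ?case by (cases o') auto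
qed simp

lemma finite_hTS: "finite (hTS u)"
  using finite_subset[OF hTS_subset_hV finite_hV] .

lemma hE_edge_subset_hV: "e \<in> hE u \<Longrightarrow> e \<subseteq> hV u"
proof (induction u)
  case (Node o' l r)
  then show ?case using hTS_subset_hV[of l] hTS_subset_hV[of r] by (cases o') auto
qed simp

lemma hE_edge_nonempty: "e \<in> hE u \<Longrightarrow> e \<noteq> {}"
proof (induction u)
  case (Node o' l r)
  then show ?case by (cases o') auto
qed simp

lemma distinct_leaves_subtree:
  "v \<in> subtrees T \<Longrightarrow> distinct_leaves T \<Longrightarrow> distinct_leaves v"
  by (induction T) auto

lemma k_feasible_le_card_hTS:
  assumes "k_feasible u k S"
  shows "k \<le> card (hTS u)"
  using assms finite_hTS[of u] unfolding k_feasible_def by (metis card_mono le_infE)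

lemma k_feasible_TrueTwin_commute:
  "k_feasible (Node TrueTwin L R) = k_feasible (Node TrueTwin R L)"
proof -
  have "hE (Node TrueTwin L R) = hE (Node TrueTwin R L)"
    by (auto simp: insert_commute)
  then show ?thesis unfolding k_feasible_def by (simp add: Un_commute)
qed

lemma hE_TrueTwin_crossing:
  assumes "e \<in> hE (Node TrueTwin L R)" "hV L \<inter> hV R = {}"
    and "x \<in> e" "x \<in> hV L" "e \<inter> hV R \<noteq> {}"
  shows "x \<in> hTS L"
  using assms hE_edge_subset_hV[of e L] hE_edge_subset_hV[of e R]
    hTS_subset_hV[of L] hTS_subset_hV[of R]
  by auto

lemma hE_TrueTwin_left:
  assumes "e \<in> hE (Node TrueTwin L R)" "hV L \<inter> hV R = {}" "e \<subseteq> hV L"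
  shows "e \<in> hE L"
  using assms hE_edge_subset_hV[of e R] hE_edge_nonempty[of e R] hTS_subset_hV[of R] by auto

lemma closed_nbhd_TrueTwin_left:
  assumes "x \<in> closed_nbhd (hV (Node TrueTwin L R)) (hE (Node TrueTwin L R)) S"
    and "hV L \<inter> hV R = {}" "x \<in> hV L - hTS L"
  shows "x \<in> closed_nbhd (hV L) (hE L) (S \<inter> hV L)"
proof (cases "x \<in> S")
  case False
  then obtain s where s: "s \<in> S" "{s, x} \<in> hE (Node TrueTwin L R)"
    using assms(1) unfolding closed_nbhd_def by auto
  have "{s, x} \<inter> hV R = {}"
    using hE_TrueTwin_crossing[OF s(2) assms(2)] assms(3) by blast
  then have "{s, x} \<subseteq> hV L"
    using hE_edge_subset_hV[OF s(2)] by auto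
  then show ?thesis
    using hE_TrueTwin_left[OF s(2) assms(2)] s(1) assms(3) unfolding closed_nbhd_def by auto
qed (use assms(3) in \<open>auto simp: closed_nbhd_def\<close>)

lemma k_feasible_TrueTwin_Un:
  assumes "k_feasible L kl Sl" "k_feasible R kr Sr" "hV L \<inter> hV R = {}"
  shows "k_feasible (Node TrueTwin L R) (kl + kr) (Sl \<union> Sr)"
proof -
  let ?v = "Node TrueTwin L R"
  obtain Xl where Xl: "Xl \<subseteq> Sl \<inter> hTS L" "card Xl = kl" "has_perfect_matching (Sl - Xl) (hE L)"
    using assms(1) unfolding k_feasible_def by blast
  obtain Xr where Xr: "Xr \<subseteq> Sr \<inter> hTS R" "card Xr = kr" "has_perfect_matching (Sr - Xr) (hE R)"
    using assms(2) unfolding k_feasible_def by blast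
  have Sl: "Sl \<subseteq> hV L" "hV L - hTS L \<subseteq> closed_nbhd (hV L) (hE L) Sl"
    and Sr: "Sr \<subseteq> hV R" "hV R - hTS R \<subseteq> closed_nbhd (hV R) (hE R) Sr"
    using assms(1,2) unfolding k_feasible_def by auto
  have "Xl \<inter> Xr = {}"
    using Xl(1) Xr(1) Sl(1) Sr(1) assms(3) by blast
  then have "card (Xl \<union> Xr) = kl + kr"
    using Xl Xr finite_hTS by (metis card_Un_disjoint finite_subset le_infE)
  moreover have "(Sl \<union> Sr) - (Xl \<union> Xr) = (Sl - Xl) \<union> (Sr - Xr)"
    using Sl(1) Sr(1) Xl(1) Xr(1) assms(3) by blast
  moreover have "has_perfect_matching ((Sl - Xl) \<union> (Sr - Xr)) (hE ?v)"
    using Sl(1) Sr(1) assms(3)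
    by (intro has_perfect_matching_Un has_perfect_matching_mono[OF Xl(3)]
        has_perfect_matching_mono[OF Xr(3)]) auto
  moreover have "hV ?v - hTS ?v \<subseteq> closed_nbhd (hV ?v) (hE ?v) (Sl \<union> Sr)"
    using Sl(2) Sr(2) unfolding closed_nbhd_def by auto
  moreover have "Xl \<union> Xr \<subseteq> (Sl \<union> Sr) \<inter> hTS ?v"
    using Xl(1) Xr(1) by auto
  ultimately show ?thesis
    using Sl(1) Sr(1) unfolding k_feasible_def by (intro conjI exI[of _ "Xl \<union> Xr"]) auto
qed

lemma k_feasible_TrueTwin_left:
  assumes "k_feasible (Node TrueTwin L R) k S" "hV L \<inter> hV R = {}"
  shows "\<exists>kl. k_feasible L kl (S \<inter> hV L)"
proof -
  let ?v = "Node TrueTwin L R"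
  obtain X where X: "X \<subseteq> S \<inter> (hTS L \<union> hTS R)" and pm: "has_perfect_matching (S - X) (hE ?v)"
    using assms(1) unfolding k_feasible_def by auto
  have dom: "hV ?v - hTS ?v \<subseteq> closed_nbhd (hV ?v) (hE ?v) S"
    using assms(1) unfolding k_feasible_def by blast
  obtain A where A: "A \<subseteq> (S - X) \<inter> hV L"
    and A_crossing: "\<And>x. x \<in> A \<Longrightarrow> \<exists>e \<in> hE ?v. x \<in> e \<and> \<not> e \<subseteq> hV L"
    and pm_L: "has_perfect_matching ((S - X) \<inter> hV L - A) {e \<in> hE ?v. e \<subseteq> hV L}"
    using has_perfect_matching_restrict[OF pm, of "hV L"] by blast
  have "A \<subseteq> hTS L"
  proof
    fix x assume "x \<in> A"
    then obtain e where e: "e \<in> hE ?v" "x \<in> e" "\<not> e \<subseteq> hV L"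
      using A_crossing by metis
    then have "e \<inter> hV R \<noteq> {}"
      using hE_edge_subset_hV[OF e(1)] by auto
    then show "x \<in> hTS L"
      using hE_TrueTwin_crossing[OF e(1) assms(2) e(2)] \<open>x \<in> A\<close> A by blast
  qed
  moreover have "X \<inter> hV L \<subseteq> hTS L"
    using X assms(2) hTS_subset_hV[of R] by blast
  ultimately have Y: "X \<inter> hV L \<union> A \<subseteq> S \<inter> hV L \<inter> hTS L"
    using A X by blast
  have "S \<inter> hV L - (X \<inter> hV L \<union> A) = (S - X) \<inter> hV L - A"
    by blast
  moreover have "{e \<in> hE ?v. e \<subseteq> hV L} \<subseteq> hE L"
    using hE_TrueTwin_left[OF _ assms(2)] by blast
  ultimately have "has_perfect_matching (S \<inter> hV L - (X \<inter> hV L \<union> A)) (hE L)"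
    using pm_L has_perfect_matching_mono by metis
  moreover have "hV L - hTS L \<subseteq> closed_nbhd (hV L) (hE L) (S \<inter> hV L)"
  proof
    fix x assume x: "x \<in> hV L - hTS L"
    then have "x \<in> hV ?v - hTS ?v"
      using assms(2) hTS_subset_hV[of R] by auto
    then show "x \<in> closed_nbhd (hV L) (hE L) (S \<inter> hV L)"
      using dom closed_nbhd_TrueTwin_left[OF _ assms(2) x] by blast
  qed
  ultimately have "k_feasible L (card (X \<inter> hV L \<union> A)) (S \<inter> hV L)"
    using Y unfolding k_feasible_def by (intro conjI exI[of _ "X \<inter> hV L \<union> A"]) auto
  then show ?thesis ..
qed

lemma k_feasible_TrueTwin_right:
  assumes "k_feasible (Node TrueTwin L R) k S" "hV L \<inter> hV R = {}"
  shows "\<exists>kr. k_feasible R kr (S \<inter> hV R)"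
proof -
  have "k_feasible (Node TrueTwin R L) k S"
    using assms(1) by (subst k_feasible_TrueTwin_commute)
  then show ?thesis
    using k_feasible_TrueTwin_left assms(2) by (metis Int_commute)
qed

lemma hmin_le_card:
  assumes "k_feasible u k S"
  shows "hmin u \<le> enat (card S)"
proof -
  have "hmin u \<le> hgamma u k"
    unfolding hmin_def using k_feasible_le_card_hTS[OF assms] by (intro Min_le) auto
  also have "\<dots> \<le> enat (card S)"
    unfolding hgamma_def using assms by (intro INF_lower) simp
  finally show ?thesis .
qed

lemma hmin_eq_hgamma: obtains k where "hmin u = hgamma u k"
proof -
  have "hmin u \<in> hgamma u ` {0..card (hTS u)}"
    unfolding hmin_def by (intro Min_in) auto
  then show ?thesis
    using that by blast
qed

lemma hmin_greatest:
  assumes "\<And>k S. k_feasible u k S \<Longrightarrow> m \<le> enat (card S)"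
  shows "m \<le> hmin u"
proof -
  obtain k where "hmin u = hgamma u k"
    by (rule hmin_eq_hgamma)
  then show ?thesis
    unfolding hgamma_def using assms by (auto intro: INF_greatest)
qed

lemma hmin_attained:
  assumes "hmin u \<noteq> \<infinity>"
  obtains k S where "k_feasible u k S" "hmin u = enat (card S)"
proof -
  obtain k where k: "hmin u = hgamma u k"
    by (rule hmin_eq_hgamma)
  have "{S. k_feasible u k S} \<noteq> {}"
  proof
    assume "{S. k_feasible u k S} = {}"
    then have "hgamma u k = \<infinity>"
      unfolding hgamma_def by (metis INF_empty top_enat_def)
    then show False
      using assms k by simp
  qed
  then obtain S0 where "k_feasible u k S0"
    by blast
  then have "hgamma u k \<in> (\<lambda>S. enat (card S)) ` {S. k_feasible u k S}"
    unfolding hgamma_def by (intro wellorder_InfI[of "enat (card S0)"]) auto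
  then show ?thesis
    using that k by auto
qed

lemma hmin_TrueTwin_le:
  assumes "hV L \<inter> hV R = {}"
  shows "hmin (Node TrueTwin L R) \<le> hmin L + hmin R"
proof (cases "hmin L = \<infinity> \<or> hmin R = \<infinity>")
  case False
  then obtain kl Sl kr Sr where Sl: "k_feasible L kl Sl" "hmin L = enat (card Sl)"
    and Sr: "k_feasible R kr Sr" "hmin R = enat (card Sr)"
    using hmin_attained by metis
  have "Sl \<subseteq> hV L" "Sr \<subseteq> hV R"
    using Sl(1) Sr(1) unfolding k_feasible_def by auto
  then have "card (Sl \<union> Sr) = card Sl + card Sr"
    using assms finite_hV by (meson card_Un_disjoint disjoint_iff finite_subset subsetD)
  then show ?thesis
    using hmin_le_card[OF k_feasible_TrueTwin_Un[OF Sl(1) Sr(1) assms]] Sl(2) Sr(2) by simp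
qed auto

lemma hmin_TrueTwin_ge:
  assumes "hV L \<inter> hV R = {}"
  shows "hmin L + hmin R \<le> hmin (Node TrueTwin L R)"
proof (rule hmin_greatest)
  fix k S assume S: "k_feasible (Node TrueTwin L R) k S"
  obtain kl kr where "k_feasible L kl (S \<inter> hV L)" "k_feasible R kr (S \<inter> hV R)"
    using k_feasible_TrueTwin_left[OF S assms] k_feasible_TrueTwin_right[OF S assms] by blast
  then have "hmin L + hmin R \<le> enat (card (S \<inter> hV L)) + enat (card (S \<inter> hV R))"
    by (intro add_mono hmin_le_card)
  moreover have "card S = card (S \<inter> hV L) + card (S \<inter> hV R)"
  proof -
    have "card S = card ((S \<inter> hV L) \<union> (S \<inter> hV R))"
      using S unfolding k_feasible_def by (intro arg_cong[where f = card]) auto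
    also have "\<dots> = card (S \<inter> hV L) + card (S \<inter> hV R)"
      using assms finite_hV by (intro card_Un_disjoint) auto
    finally show ?thesis .
  qed
  ultimately show "hmin L + hmin R \<le> enat (card S)"
    by simp
qed

lemma hmin_TrueTwin:
  assumes "hV L \<inter> hV R = {}"
  shows "hmin (Node TrueTwin L R) = hmin L + hmin R"
  using hmin_TrueTwin_le[OF assms] hmin_TrueTwin_ge[OF assms] by (rule antisym)

theorem lemma6:
  fixes V :: "'a set" and E :: "'a set set" and T v vl vr :: "'a dtree"
  assumes "is_graph V E"
    and "distance_hereditary V E"
    and "decomp_tree T V E"
    and "v \<in> subtrees T"
    and "v = Node TrueTwin vl vr"
    and "prop_P vl" and "prop_P vr"
  shows "hmin v = hmin vl + hmin vr"
proof -
  have "distinct_leaves v"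
    using distinct_leaves_subtree assms(3,4) unfolding decomp_tree_def by blast
  then have "hV vl \<inter> hV vr = {}"
    using assms(5) by simp
  then show ?thesis
    using hmin_TrueTwin assms(5) by simp
qed

end
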